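(* Consider an SDE on $\mathbf{R}^d$ with locally Lipschitz coefficients and its maximal flow $(\phi,\tau)$. Let $U_1\subset U_2\subset\cdots$ be bounded open subsets of $\mathbf{R}^d$ with $\bigcup_n U_n=\mathbf{R}^d$. For a compact set $K\subset\mathbf{R}^d$ set $\tau^K_n:=\inf\{t>0:\phi_t(K)\not\subseteq U_n\}$ (with $\tau_0^K:=0$) and $\tau^K:=\inf_{x\in K}\tau(x)$. (i) Suppose there are nonnegative sequences $(a_n),(b_n)$ with $\sum_n a_n=\infty$ and $\sum_n b_n<\infty$ such that for all $n$, $$\mathbf P\{\tau^K_n-\tau^K_{n-1}\le a_n,\ \tau^K_{n-1}<\infty\}\le b_n.$$ Then $\tau^K=\infty$ almost surely. If this holds for every compact $K$, the SDE is strongly complete. (ii) Conversely, let $(a_n),(b_n)$ be nonnegative summable sequences and let $T_1,T_2,\dots$ be finite random times with $\tau^K\le\sum_j T_j$. If $\mathbf P\{T_n\ge a_n\}\le b_n$ for all $n$, then $\tau^K<\infty$ almost surely.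
   Context: Let $(\Omega,\mathcal F,\mathbf P)$ be a probability space. For an SDE on $\mathbf{R}^d$ with locally Lipschitz coefficients driven by independent Brownian motions, a maximal flow is a pair $(\phi,\tau)$ with $\tau:\mathbf{R}^d\times\Omega\to(0,\infty]$ and $\phi_t(x,\omega)$ defined for $t<\tau(x,\omega)$, such that for each $x$, $\phi_\cdot(x)$ solves the SDE from $x$ on $[0,\tau(x))$; $(t,x)\mapsto\phi_t(x,\omega)$ is continuous on $\{t<\tau(x,\omega)\}$; and $\limsup_{t\to\tau(x,\omega)}|\phi_t(x,\omega)|=\infty$ on $\{\tau(x)<\infty\}$. The SDE is strongly complete if there is a set $\Omega_0$ of full probability with $\tau(x,\omega)=\infty$ for all $x$ and all $\omega\in\Omega_0$. *)

theory Defs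
  imports "HOL-Probability.Probability"
begin

text \<open>A random local flow (phi, tau) on a euclidean space, with sample space type 'w.
  phi t x w is meaningful for 0 <= t < tau x w.  This records the structural properties of a
  maximal flow: initial condition, positivity of the lifetime, joint continuity on the domain
  of definition, and explosion at a finite lifetime.  (The property that each trajectory
  solves the SDE is not expressible: HOL has no Ito integral.)\<close>
definition maximal_flow ::
  "'w measure \<Rightarrow> (real \<Rightarrow> 'a::euclidean_space \<Rightarrow> 'w \<Rightarrow> 'a) \<Rightarrow> ('a \<Rightarrow> 'w \<Rightarrow> ereal) \<Rightarrow> bool" where
  "maximal_flow M \<phi> \<tau> \<longleftrightarrow>
     (\<forall>\<omega>\<in>space M.
        (\<forall>x. 0 < \<tau> x \<omega>) \<and>
        (\<forall>x. \<phi> 0 x \<omega> = x) \<and>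
        continuous_on {(t, x). 0 \<le> t \<and> ereal t < \<tau> x \<omega>} (\<lambda>(t, x). \<phi> t x \<omega>) \<and>
        (\<forall>x. \<tau> x \<omega> < \<infinity> \<longrightarrow>
           (\<forall>B. \<exists>\<^sub>F t in at_left (real_of_ereal (\<tau> x \<omega>)). B < norm (\<phi> t x \<omega>))))"

definition flow_image_in ::
  "(real \<Rightarrow> 'a \<Rightarrow> 'w \<Rightarrow> 'a) \<Rightarrow> ('a \<Rightarrow> 'w \<Rightarrow> ereal) \<Rightarrow> real \<Rightarrow> 'a set \<Rightarrow> 'a set \<Rightarrow> 'w \<Rightarrow> bool" where
  "flow_image_in \<phi> \<tau> t K U \<omega> \<longleftrightarrow> (\<forall>x\<in>K. ereal t < \<tau> x \<omega> \<and> \<phi> t x \<omega> \<in> U)"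

text \<open>tau^K_n = inf {t > 0 : phi_t(K) not contained in U_n} (inf of the empty set = infinity),
  and tau^K_0 = 0.\<close>
definition exit_time ::
  "(real \<Rightarrow> 'a \<Rightarrow> 'w \<Rightarrow> 'a) \<Rightarrow> ('a \<Rightarrow> 'w \<Rightarrow> ereal) \<Rightarrow> (nat \<Rightarrow> 'a set) \<Rightarrow> 'a set \<Rightarrow> nat \<Rightarrow> 'w \<Rightarrow> ereal" where
  "exit_time \<phi> \<tau> U K n \<omega> =
     (if n = 0 then 0
      else Inf {ereal t | t. 0 < t \<and> \<not> flow_image_in \<phi> \<tau> t K (U n) \<omega>})"

definition life_time :: "('a \<Rightarrow> 'w \<Rightarrow> ereal) \<Rightarrow> 'a set \<Rightarrow> 'w \<Rightarrow> ereal" where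
  "life_time \<tau> K \<omega> = (INF x\<in>K. \<tau> x \<omega>)"

definition strongly_complete :: "'w measure \<Rightarrow> ('a \<Rightarrow> 'w \<Rightarrow> ereal) \<Rightarrow> bool" where
  "strongly_complete M \<tau> \<longleftrightarrow>
     (\<exists>\<Omega>0\<in>sets M. measure M \<Omega>0 = 1 \<and> (\<forall>\<omega>\<in>\<Omega>0. \<forall>x. \<tau> x \<omega> = \<infinity>))"

end

theory Submission
  imports Defs
begin

(* Both halves of the theorem are Borel-Cantelli arguments about the exit times
   tau^K_n of the flow from the exhausting sets U_n.

   (i) The exit times are nonnegative and never exceed the lifetime tau^K of K.
   By Borel-Cantelli, almost surely all but finitely many increments
   tau^K_{n+1} - tau^K_n exceed a_{n+1}.  If tau^K were finite, the exit times
   would form a bounded real sequence whose increments eventually dominate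
   (a_n); telescoping then makes (a_n) summable, a contradiction.  Applying this
   to the closed balls of integer radius gives strong completeness.

   (ii) By Borel-Cantelli, almost surely T_n < a_n for all large n, so the
   series of the T_n converges and bounds tau^K by a finite number. *)

lemma summable_if_dominated_by_increments:
  fixes r a :: "nat \<Rightarrow> real"
  assumes bounded: "\<And>n. r n \<le> l"
    and nonneg: "\<And>n. 0 \<le> a n"
    and increments: "eventually (\<lambda>n. a n \<le> r (Suc n) - r n) sequentially"
  shows "summable a"
proof -
  obtain N where N: "\<And>n. n \<ge> N \<Longrightarrow> a n \<le> r (Suc n) - r n"
    using increments by (auto simp: eventually_sequentially)
  have telescope: "(\<Sum>i<k. a (i + N)) \<le> r (k + N) - r N" for k
  proof (induction k)
    case 0
    show ?case by simp
  next
    case (Suc k)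
    have "(\<Sum>i<Suc k. a (i + N)) = (\<Sum>i<k. a (i + N)) + a (k + N)" by simp
    also have "\<dots> \<le> (r (k + N) - r N) + (r (Suc (k + N)) - r (k + N))"
      using Suc.IH N[of "k + N"] by linarith
    finally show ?case by simp
  qed
  have "summable (\<lambda>i. a (i + N))"
  proof (rule summableI_nonneg_bounded)
    show "0 \<le> a (i + N)" for i by (rule nonneg)
    show "(\<Sum>i<k. a (i + N)) \<le> l - r N" for k
      using telescope[of k] bounded[of "k + N"] by linarith
  qed
  then show ?thesis by (rule summable_iff_shift[THEN iffD1])
qed

lemma suminf_ereal_finite_if_eventually_dominated:
  fixes T a :: "nat \<Rightarrow> real"
  assumes nonneg: "\<And>n. 0 \<le> T n"
    and summable_a: "summable a"
    and dominated: "eventually (\<lambda>n. T n \<le> a n) sequentially"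
  shows "(\<Sum>j. ereal (T j)) < \<infinity>"
proof -
  have "eventually (\<lambda>n. norm (T n) \<le> a n) sequentially"
    using dominated by eventually_elim (simp add: nonneg)
  then have "summable T" using summable_a by (rule summable_comparison_test_ev)
  then have "(\<lambda>j. ereal (T j)) sums ereal (\<Sum>j. T j)"
    by (simp add: sums_ereal summable_sums)
  then have "(\<Sum>j. ereal (T j)) = ereal (\<Sum>j. T j)" by (rule sums_unique[symmetric])
  then show ?thesis by simp
qed

lemma maximal_flow_lifetime_pos:
  assumes "maximal_flow M \<phi> \<tau>" and "\<omega> \<in> space M"
  shows "0 < \<tau> x \<omega>"
  using assms unfolding maximal_flow_def by blast

lemma exit_time_nonneg: "0 \<le> exit_time \<phi> \<tau> U K n \<omega>"
  unfolding exit_time_def by (auto intro!: Inf_greatest)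

text \<open>No exit time exceeds the lifetime of K: if tau(x) < t < tau^K_n for some x in K, then
  phi_t(K) is not contained in U_n because x is no longer alive at time t.\<close>
lemma exit_time_le_life_time:
  assumes pos: "\<And>x. 0 < \<tau> x \<omega>"
  shows "exit_time \<phi> \<tau> U K n \<omega> \<le> life_time \<tau> K \<omega>"
  unfolding life_time_def
proof (rule INF_greatest)
  fix x assume "x \<in> K"
  show "exit_time \<phi> \<tau> U K n \<omega> \<le> \<tau> x \<omega>"
  proof (rule ccontr)
    assume "\<not> ?thesis"
    then have "\<tau> x \<omega> < exit_time \<phi> \<tau> U K n \<omega>" by simp
    then obtain t where dies: "\<tau> x \<omega> < ereal t" and before_exit: "ereal t < exit_time \<phi> \<tau> U K n \<omega>"
      using ereal_dense2 by blast
    have "0 < t" using pos[of x] dies by (metis ereal_less(2) order.strict_trans)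
    have "n \<noteq> 0" using before_exit \<open>0 < t\<close> unfolding exit_time_def by (auto split: if_splits)
    have "\<not> flow_image_in \<phi> \<tau> t K (U n) \<omega>"
      using \<open>x \<in> K\<close> dies unfolding flow_image_in_def by (meson order.asym)
    then have "exit_time \<phi> \<tau> U K n \<omega> \<le> ereal t"
      unfolding exit_time_def using \<open>n \<noteq> 0\<close> \<open>0 < t\<close> by (auto intro!: Inf_lower)
    then show False using before_exit by simp
  qed
qed

lemma (in prob_space) AE_eventually_not_in_if_summable_bound:
  assumes events: "\<And>n. A n \<in> events"
    and bound: "\<And>n. prob (A n) \<le> b n"
    and summable_b: "summable b"
  shows "AE \<omega> in M. eventually (\<lambda>n. \<omega> \<notin> A n) sequentially"
proof -
  have "summable (\<lambda>n. prob (A n))"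
    using summable_b by (rule summable_comparison_test') (use bound in auto)
  then have "AE \<omega> in M. eventually (\<lambda>n. \<omega> \<in> space M - A n) sequentially"
    by (intro borel_cantelli_AE1 events) (auto simp: emeasure_eq_measure)
  then show ?thesis by (rule AE_mp) (auto elim: eventually_mono)
qed

lemma (in prob_space) life_time_infinite_AE:
  assumes pos: "\<And>\<omega> x. \<omega> \<in> space M \<Longrightarrow> 0 < \<tau> x \<omega>"
    and exit_meas: "\<And>n. exit_time \<phi> \<tau> U K n \<in> borel_measurable M"
    and a_nonneg: "\<forall>n\<ge>1. 0 \<le> a n"
    and a_divergent: "\<not> summable (\<lambda>n. a (Suc n))"
    and b_summable: "summable (\<lambda>n. b (Suc n))"
    and increment_bound: "\<forall>n\<ge>1. prob {\<omega>\<in>space M.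
              exit_time \<phi> \<tau> U K n \<omega> - exit_time \<phi> \<tau> U K (n - 1) \<omega> \<le> ereal (a n) \<and>
              exit_time \<phi> \<tau> U K (n - 1) \<omega> < \<infinity>} \<le> b n"
  shows "AE \<omega> in M. life_time \<tau> K \<omega> = \<infinity>"
proof -
  define e where "e = exit_time \<phi> \<tau> U K"
  have [measurable]: "\<And>n. e n \<in> borel_measurable M" using exit_meas by (simp add: e_def)
  define A where "A n = {\<omega>\<in>space M. e (Suc n) \<omega> - e n \<omega> \<le> ereal (a (Suc n)) \<and> e n \<omega> < \<infinity>}" for n
  have "AE \<omega> in M. eventually (\<lambda>n. \<omega> \<notin> A n) sequentially"
  proof (rule AE_eventually_not_in_if_summable_bound[OF _ _ b_summable])
    show "A n \<in> events" for n unfolding A_def by measurable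
    show "prob (A n) \<le> b (Suc n)" for n
      using increment_bound[rule_format, of "Suc n"] by (simp add: A_def e_def)
  qed
  then show ?thesis
  proof (rule AE_mp, intro AE_I2 impI)
    fix \<omega> assume \<omega>: "\<omega> \<in> space M" and large_increments: "eventually (\<lambda>n. \<omega> \<notin> A n) sequentially"
    show "life_time \<tau> K \<omega> = \<infinity>"
    proof (rule ccontr)
      assume "life_time \<tau> K \<omega> \<noteq> \<infinity>"
      have below_life: "e n \<omega> \<le> life_time \<tau> K \<omega>" for n
        unfolding e_def using pos \<omega> by (intro exit_time_le_life_time)
      obtain l where l: "life_time \<tau> K \<omega> = ereal l"
        using \<open>life_time \<tau> K \<omega> \<noteq> \<infinity>\<close> below_life[of 0] exit_time_nonneg[of \<phi> \<tau> U K 0 \<omega>]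
        by (cases "life_time \<tau> K \<omega>") (auto simp: e_def)
      define r where "r n = real_of_ereal (e n \<omega>)" for n
      have e_real: "e n \<omega> = ereal (r n)" for n
        using below_life[of n] l exit_time_nonneg[of \<phi> \<tau> U K n \<omega>]
        by (cases "e n \<omega>") (auto simp: r_def e_def)
      have "summable (\<lambda>n. a (Suc n))"
      proof (rule summable_if_dominated_by_increments)
        show "r n \<le> l" for n using below_life[of n] l e_real[of n] by simp
        show "0 \<le> a (Suc n)" for n using a_nonneg by simp
        show "eventually (\<lambda>n. a (Suc n) \<le> r (Suc n) - r n) sequentially"
          using large_increments by eventually_elim (auto simp: A_def \<omega> e_real)
      qed
      then show False using a_divergent by contradiction
    qed
  qed
qed

lemma (in prob_space) dominated_time_finite_AE:
  assumes a_summable: "summable (\<lambda>n. a (Suc n))"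
    and b_summable: "summable (\<lambda>n. b (Suc n))"
    and T_meas: "\<forall>n\<ge>1. T n \<in> borel_measurable M \<and> (\<forall>\<omega>\<in>space M. 0 \<le> T n \<omega>)"
    and dominated: "\<forall>\<omega>\<in>space M. L \<omega> \<le> (\<Sum>j. ereal (T (Suc j) \<omega>))"
    and tail_bound: "\<forall>n\<ge>1. prob {\<omega>\<in>space M. a n \<le> T n \<omega>} \<le> b n"
  shows "AE \<omega> in M. L \<omega> < \<infinity>"
proof -
  have [measurable]: "\<And>n. T (Suc n) \<in> borel_measurable M" using T_meas by auto
  define A where "A n = {\<omega>\<in>space M. a (Suc n) \<le> T (Suc n) \<omega>}" for n
  have "AE \<omega> in M. eventually (\<lambda>n. \<omega> \<notin> A n) sequentially"
  proof (rule AE_eventually_not_in_if_summable_bound[OF _ _ b_summable])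
    show "A n \<in> events" for n unfolding A_def by measurable
    show "prob (A n) \<le> b (Suc n)" for n
      using tail_bound[rule_format, of "Suc n"] by (simp add: A_def)
  qed
  then show ?thesis
  proof (rule AE_mp, intro AE_I2 impI)
    fix \<omega> assume \<omega>: "\<omega> \<in> space M" and small: "eventually (\<lambda>n. \<omega> \<notin> A n) sequentially"
    have "(\<Sum>j. ereal (T (Suc j) \<omega>)) < \<infinity>"
    proof (rule suminf_ereal_finite_if_eventually_dominated[OF _ a_summable])
      show "0 \<le> T (Suc n) \<omega>" for n using T_meas \<omega> by auto
      show "eventually (\<lambda>n. T (Suc n) \<omega> \<le> a (Suc n)) sequentially"
        using small by eventually_elim (auto simp: A_def \<omega>)
    qed
    then show "L \<omega> < \<infinity>" by (rule order.strict_trans1[OF dominated[rule_format, OF \<omega>]])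
  qed
qed

text \<open>Strong completeness follows once the closed balls of integer radius almost surely
  do not explode, since these countably many balls cover the space.\<close>
lemma (in prob_space) strongly_complete_if_balls_survive:
  fixes \<tau> :: "'x::real_normed_vector \<Rightarrow> 'a \<Rightarrow> ereal"
  assumes balls: "\<And>m::nat. AE \<omega> in M. life_time \<tau> (cball 0 (real m)) \<omega> = \<infinity>"
  shows "strongly_complete M \<tau>"
proof -
  have "AE \<omega> in M. \<forall>m::nat. life_time \<tau> (cball 0 (real m)) \<omega> = \<infinity>"
    using balls by (simp add: AE_all_countable)
  then obtain N where N: "{\<omega> \<in> space M. \<not> (\<forall>m::nat. life_time \<tau> (cball 0 (real m)) \<omega> = \<infinity>)} \<subseteq> N"
    "emeasure M N = 0" "N \<in> sets M" by (rule AE_E)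
  show ?thesis
    unfolding strongly_complete_def
  proof (intro bexI conjI ballI allI)
    show "space M - N \<in> sets M" using N by auto
    show "prob (space M - N) = 1" using N prob_compl[of N] by (simp add: emeasure_eq_measure)
    fix \<omega> and x :: 'x assume "\<omega> \<in> space M - N"
    then have survives: "life_time \<tau> (cball 0 (real m)) \<omega> = \<infinity>" for m using N(1) by auto
    obtain m :: nat where "norm x \<le> real m" using real_arch_simple by blast
    then have "life_time \<tau> (cball 0 (real m)) \<omega> \<le> \<tau> x \<omega>"
      unfolding life_time_def by (intro INF_lower) simp
    then show "\<tau> x \<omega> = \<infinity>" using survives[of m] by simp
  qed
qed

theorem mainTheorem3:
  fixes M :: "'w measure"
    and \<phi> :: "real \<Rightarrow> 'a::euclidean_space \<Rightarrow> 'w \<Rightarrow> 'a"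
    and \<tau> :: "'a \<Rightarrow> 'w \<Rightarrow> ereal"
    and U :: "nat \<Rightarrow> 'a set"
  assumes P: "prob_space M"
    and flow: "maximal_flow M \<phi> \<tau>"
    and U_open: "\<forall>n\<ge>1. open (U n) \<and> bounded (U n)"
    and U_mono: "\<forall>n\<ge>1. U n \<subseteq> U (Suc n)"
    and U_cover: "(\<Union>n\<in>{1..}. U n) = UNIV"
    and exit_meas: "\<forall>K n. compact K \<longrightarrow> exit_time \<phi> \<tau> U K n \<in> borel_measurable M"
  shows
    "(\<forall>K (a::nat \<Rightarrow> real) (b::nat \<Rightarrow> real).
        compact K \<and> (\<forall>n\<ge>1. 0 \<le> a n \<and> 0 \<le> b n) \<and>
        \<not> summable (\<lambda>n. a (Suc n)) \<and> summable (\<lambda>n. b (Suc n)) \<and>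
        (\<forall>n\<ge>1. measure M {\<omega>\<in>space M.
              exit_time \<phi> \<tau> U K n \<omega> - exit_time \<phi> \<tau> U K (n - 1) \<omega> \<le> ereal (a n) \<and>
              exit_time \<phi> \<tau> U K (n - 1) \<omega> < \<infinity>} \<le> b n)
      \<longrightarrow> (AE \<omega> in M. life_time \<tau> K \<omega> = \<infinity>))
   \<and> ((\<forall>K. compact K \<longrightarrow>
          (\<exists>(a::nat \<Rightarrow> real) (b::nat \<Rightarrow> real).
             (\<forall>n\<ge>1. 0 \<le> a n \<and> 0 \<le> b n) \<and>
             \<not> summable (\<lambda>n. a (Suc n)) \<and> summable (\<lambda>n. b (Suc n)) \<and>
             (\<forall>n\<ge>1. measure M {\<omega>\<in>space M.
                  exit_time \<phi> \<tau> U K n \<omega> - exit_time \<phi> \<tau> U K (n - 1) \<omega> \<le> ereal (a n) \<and>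
                  exit_time \<phi> \<tau> U K (n - 1) \<omega> < \<infinity>} \<le> b n)))
       \<longrightarrow> strongly_complete M \<tau>)
   \<and> (\<forall>K (a::nat \<Rightarrow> real) (b::nat \<Rightarrow> real) (T::nat \<Rightarrow> 'w \<Rightarrow> real).
        compact K \<and> (\<forall>n\<ge>1. 0 \<le> a n \<and> 0 \<le> b n) \<and>
        summable (\<lambda>n. a (Suc n)) \<and> summable (\<lambda>n. b (Suc n)) \<and>
        (\<forall>n\<ge>1. T n \<in> borel_measurable M \<and> (\<forall>\<omega>\<in>space M. 0 \<le> T n \<omega>)) \<and>
        (\<forall>\<omega>\<in>space M. life_time \<tau> K \<omega> \<le> (\<Sum>j. ereal (T (Suc j) \<omega>))) \<and>
        (\<forall>n\<ge>1. measure M {\<omega>\<in>space M. a n \<le> T n \<omega>} \<le> b n)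
      \<longrightarrow> (AE \<omega> in M. life_time \<tau> K \<omega> < \<infinity>))"
proof -
  interpret prob_space M by (rule P)
  have pos: "\<And>\<omega> x. \<omega> \<in> space M \<Longrightarrow> 0 < \<tau> x \<omega>"
    using flow by (rule maximal_flow_lifetime_pos)
  have part_i: "AE \<omega> in M. life_time \<tau> K \<omega> = \<infinity>"
    if "compact K" "\<forall>n\<ge>1. 0 \<le> a n \<and> 0 \<le> b n" "\<not> summable (\<lambda>n. a (Suc n))"
      "summable (\<lambda>n. b (Suc n))"
      "\<forall>n\<ge>1. measure M {\<omega>\<in>space M.
          exit_time \<phi> \<tau> U K n \<omega> - exit_time \<phi> \<tau> U K (n - 1) \<omega> \<le> ereal (a n) \<and>
          exit_time \<phi> \<tau> U K (n - 1) \<omega> < \<infinity>} \<le> b n"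
    for K a b
    using that exit_meas by (intro life_time_infinite_AE[OF pos]) auto
  show ?thesis
    apply (intro conjI allI impI)
    subgoal for K a b by (elim conjE) (rule part_i[of K a b])
    subgoal
      apply (rule strongly_complete_if_balls_survive)
      subgoal premises hyp for m
        using compact_cball[of 0 "real m"] hyp[rule_format, OF compact_cball[of 0 "real m"]]
        by (elim exE conjE) (rule part_i)
      done
    subgoal for K a b T by (elim conjE) (rule dominated_time_finite_AE[of a b T])
    done
qed

end
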